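(* Let $d\ge 1$, let $\Omega=\operatorname{diag}(\omega_j)_{j=1}^d\in\mathbb{R}^{d\times d}$ with $\omega_j> 0$ for all $j$, let $\omega=\min_j\omega_j$, and let $A\in\mathbb{C}^{d\times d}$ be self-adjoint. Let $0<h\le 1$ and let $\psi_1,\phi\colon\mathbb{R}\to\mathbb{R}$ be even functions such that $\psi_1(\xi)=\operatorname{sinc}(\xi)\phi(\xi)$ for all $\xi\in\mathbb{R}$ and, for constants $c_0,c_1\ge 0$, \[ |\psi_1(\xi)|\le c_0,\qquad |\phi(\xi)|\le c_0,\qquad |\phi(\xi)-1|\le c_1|\xi|\qquad\text{for all }\xi\in\mathbb{R}. \] Assume $\omega\ge \tfrac12 c_0^2\|A\|+1$. Set $\Psi_1=\psi_1(h\Omega)$, $\Phi=\phi(h\Omega)$. For given $q_0,\dot q_0\in\mathbb{C}^d$, define $(q_n,\dot q_n)_{n\ge 0}$ recursively by \begin{align*} q_{n+1} &= \cos(h\Omega) q_n + h\operatorname{sinc}(h\Omega) \dot{q}_n - \tfrac12 h^2 \operatorname{sinc}(h\Omega) \Psi_1 A\Phi q_n,\\ \dot{q}_{n+1} &= -\Omega \sin(h\Omega) q_n + \cos(h\Omega) \dot{q}_n - \tfrac12 h \big( \cos(h\Omega) \Psi_1 A\Phi q_n + \Psi_1 A\Phi q_{n+1}\big). \end{align*} Then $\|q_n\|\le C$ for all $n$, with a constant $C$ depending only on $c_0$, $\|A\|$, $\|q_0\|$, $\|\Omega q_0\|$ and $\|\dot q_0\|$.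
   Context: $\|\cdot\|$ is the Euclidean norm on $\mathbb{C}^d$ and, for matrices, the induced operator norm. $\operatorname{sinc}(\xi)=\sin(\xi)/\xi$ for $\xi\ne0$ and $\operatorname{sinc}(0)=1$. For a function $f\colon\mathbb{R}\to\mathbb{R}$, $f(h\Omega)$ denotes the diagonal matrix $\operatorname{diag}(f(h\omega_j))_{j=1}^d$. *)

theory Defs
  imports "HOL-Analysis.Analysis"
begin

text \<open>Vectors in C^d are represented as functions nat => complex (only indices < d matter),
  d x d matrices as functions nat => nat => complex.\<close>

definition sinc :: "real \<Rightarrow> real" where
  "sinc \<xi> = (if \<xi> = 0 then 1 else sin \<xi> / \<xi>)"

definition vnorm :: "nat \<Rightarrow> (nat \<Rightarrow> complex) \<Rightarrow> real" where
  "vnorm d x = sqrt (\<Sum>j<d. (cmod (x j))\<^sup>2)"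

definition mv :: "nat \<Rightarrow> (nat \<Rightarrow> nat \<Rightarrow> complex) \<Rightarrow> (nat \<Rightarrow> complex) \<Rightarrow> (nat \<Rightarrow> complex)" where
  "mv d M x = (\<lambda>i. \<Sum>j<d. M i j * x j)"

definition opnorm :: "nat \<Rightarrow> (nat \<Rightarrow> nat \<Rightarrow> complex) \<Rightarrow> real" where
  "opnorm d M = Sup {vnorm d (mv d M x) | x. vnorm d x \<le> 1}"

definition self_adjoint :: "nat \<Rightarrow> (nat \<Rightarrow> nat \<Rightarrow> complex) \<Rightarrow> bool" where
  "self_adjoint d M \<longleftrightarrow> (\<forall>i<d. \<forall>j<d. M i j = cnj (M j i))"

text \<open>f(h Omega) applied to a vector: componentwise multiplication by f(h omega_j).\<close>
definition dgm :: "(real \<Rightarrow> real) \<Rightarrow> real \<Rightarrow> (nat \<Rightarrow> real) \<Rightarrow> (nat \<Rightarrow> complex) \<Rightarrow> (nat \<Rightarrow> complex)" where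
  "dgm f h \<omega> x = (\<lambda>j. complex_of_real (f (h * \<omega> j)) * x j)"

end

theory Submission
  imports Defs
begin

text \<open>Let \<open>B = \<Phi> A \<Phi>\<close>; it is self-adjoint because \<open>\<Phi>\<close> is real diagonal, and
  \<open>\<Psi>\<^sub>1 A \<Phi> = sinc(h\<Omega>) B\<close>. In terms of the modified velocity
  \<open>r(n) = qd(n) - (h/2) sinc(h\<Omega>) B q(n)\<close>, one step of the scheme rotates
  \<open>(\<Omega> q, r)\<close> componentwise by the angles \<open>h \<omega>\<^sub>j\<close> and then kicks \<open>r\<close> by
  \<open>- h sinc(h\<Omega>) B q(n+1)\<close>. Because \<open>B\<close> is symmetric, the modified energy
  \<open>\<parallel>r(n)\<parallel>\<^sup>2 + \<parallel>\<Omega> q(n)\<parallel>\<^sup>2 + Re \<langle>q(n+1), B q(n)\<rangle>\<close> is exactly conserved.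
  As \<open>\<parallel>q(n+1)\<parallel> \<le> \<parallel>q(n)\<parallel> + \<parallel>r(n)\<parallel>\<close> and \<open>\<omega> \<ge> \<parallel>B\<parallel>/2 + 1\<close>, completing the square
  bounds this energy below by \<open>\<parallel>q(n)\<parallel>\<^sup>2\<close>, and at \<open>n = 0\<close> it is bounded by the initial data.
  Only \<open>\<psi>\<^sub>1 = sinc \<phi>\<close>, \<open>\<bar>\<phi>\<bar> \<le> c\<^sub>0\<close>, \<open>0 < h \<le> 1\<close> and the bound on \<open>\<omega>\<close> are used.\<close>

lemma vnorm_eq_L2_set: "vnorm d x = L2_set (\<lambda>j. cmod (x j)) {..<d}"
  unfolding vnorm_def L2_set_def by simp

lemma vnorm_nonneg: "0 \<le> vnorm d x"
  by (simp add: vnorm_eq_L2_set)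

lemma vnorm_power2: "(vnorm d x)\<^sup>2 = (\<Sum>j<d. (cmod (x j))\<^sup>2)"
  unfolding vnorm_def by (simp add: sum_nonneg)

lemma vnorm_cong: "(\<And>j. j < d \<Longrightarrow> x j = y j) \<Longrightarrow> vnorm d x = vnorm d y"
  unfolding vnorm_def by (auto intro!: sum.cong)

lemma vnorm_add_le: "vnorm d (\<lambda>j. x j + y j) \<le> vnorm d x + vnorm d y"
proof -
  have "vnorm d (\<lambda>j. x j + y j) \<le> L2_set (\<lambda>j. cmod (x j) + cmod (y j)) {..<d}"
    unfolding vnorm_eq_L2_set by (rule L2_set_mono) (auto simp: norm_triangle_ineq)
  also have "\<dots> \<le> vnorm d x + vnorm d y"
    unfolding vnorm_eq_L2_set by (rule L2_set_triangle_ineq)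
  finally show ?thesis .
qed

lemma vnorm_diff_le: "vnorm d (\<lambda>j. x j - y j) \<le> vnorm d x + vnorm d y"
  using vnorm_add_le[of d x "\<lambda>j. - y j"] by (simp add: vnorm_def)

lemma vnorm_mult_le:
  assumes "\<And>j. j < d \<Longrightarrow> cmod (f j) \<le> c" and "0 \<le> c"
  shows "vnorm d (\<lambda>j. f j * x j) \<le> c * vnorm d x"
proof -
  have "vnorm d (\<lambda>j. f j * x j) \<le> L2_set (\<lambda>j. c * cmod (x j)) {..<d}"
    unfolding vnorm_eq_L2_set using assms
    by (intro L2_set_mono) (auto simp: norm_mult mult_right_mono)
  also have "\<dots> = c * vnorm d x"
    unfolding vnorm_eq_L2_set using assms(2) by (simp add: L2_set_right_distrib)
  finally show ?thesis .
qed

lemma vnorm_mult_ge: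
  assumes "\<And>j. j < d \<Longrightarrow> c \<le> cmod (f j)" and "0 \<le> c"
  shows "c * vnorm d x \<le> vnorm d (\<lambda>j. f j * x j)"
proof -
  have "c * vnorm d x = L2_set (\<lambda>j. c * cmod (x j)) {..<d}"
    unfolding vnorm_eq_L2_set using assms(2) by (simp add: L2_set_right_distrib)
  also have "\<dots> \<le> vnorm d (\<lambda>j. f j * x j)"
    unfolding vnorm_eq_L2_set using assms
    by (intro L2_set_mono) (auto simp: norm_mult mult_right_mono)
  finally show ?thesis .
qed

lemma vnorm_scaleR: "vnorm d (\<lambda>j. of_real t * x j) = \<bar>t\<bar> * vnorm d x"
  unfolding vnorm_eq_L2_set by (simp add: L2_set_right_distrib norm_mult)

lemma vnorm_eq_0D: "vnorm d x = 0 \<Longrightarrow> j < d \<Longrightarrow> x j = 0"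
  unfolding vnorm_eq_L2_set by (simp add: L2_set_eq_0_iff)

lemma norm_le_vnorm: "j < d \<Longrightarrow> cmod (x j) \<le> vnorm d x"
  unfolding vnorm_eq_L2_set by (rule member_le_L2_set) auto

definition vinner :: "nat \<Rightarrow> (nat \<Rightarrow> complex) \<Rightarrow> (nat \<Rightarrow> complex) \<Rightarrow> complex" where
  "vinner d x y = (\<Sum>j<d. x j * cnj (y j))"

lemma norm_vinner_le: "cmod (vinner d x y) \<le> vnorm d x * vnorm d y"
proof -
  have "cmod (vinner d x y) \<le> (\<Sum>j<d. cmod (x j * cnj (y j)))"
    unfolding vinner_def by (rule norm_sum)
  also have "\<dots> = (\<Sum>j<d. \<bar>cmod (x j)\<bar> * \<bar>cmod (y j)\<bar>)"
    by (simp add: norm_mult)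
  also have "\<dots> \<le> vnorm d x * vnorm d y"
    unfolding vnorm_eq_L2_set by (rule L2_set_mult_ineq)
  finally show ?thesis .
qed

lemma bdd_above_opnorm_set: "bdd_above {vnorm d (mv d M x) | x. vnorm d x \<le> 1}"
proof (rule bdd_aboveI)
  fix y assume "y \<in> {vnorm d (mv d M x) | x. vnorm d x \<le> 1}"
  then obtain x where y: "y = vnorm d (mv d M x)" and x: "vnorm d x \<le> 1" by auto
  have entry: "cmod (M i j * x j) \<le> cmod (M i j)" if "j < d" for i j
    using norm_le_vnorm[OF that, of x] x by (simp add: norm_mult mult_left_le)
  have "y \<le> (\<Sum>i<d. cmod (mv d M x i))"
    unfolding y vnorm_eq_L2_set by (rule order_trans[OF L2_set_le_sum_abs]) simp
  also have "\<dots> \<le> (\<Sum>i<d. \<Sum>j<d. cmod (M i j * x j))"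
    unfolding mv_def by (intro sum_mono norm_sum)
  also have "\<dots> \<le> (\<Sum>i<d. \<Sum>j<d. cmod (M i j))"
    using entry by (intro sum_mono) auto
  finally show "y \<le> (\<Sum>i<d. \<Sum>j<d. cmod (M i j))" .
qed

lemma vnorm_mv_le_opnorm: "vnorm d x \<le> 1 \<Longrightarrow> vnorm d (mv d M x) \<le> opnorm d M"
  unfolding opnorm_def by (rule cSup_upper[OF _ bdd_above_opnorm_set]) auto

lemma opnorm_nonneg: "0 \<le> opnorm d M"
proof -
  have "vnorm d (\<lambda>_. 0) \<le> 1" by (simp add: vnorm_def)
  then show ?thesis by (rule order_trans[OF vnorm_nonneg vnorm_mv_le_opnorm])
qed

lemma mv_scaleR: "mv d M (\<lambda>j. of_real t * x j) = (\<lambda>i. of_real t * mv d M x i)"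
  unfolding mv_def by (simp add: sum_distrib_left mult_ac)

lemma vnorm_mv_le: "vnorm d (mv d M x) \<le> opnorm d M * vnorm d x"
proof (cases "vnorm d x = 0")
  case True
  then have "mv d M x = (\<lambda>i. 0)"
    unfolding mv_def using vnorm_eq_0D[OF True] by auto
  then show ?thesis using True by (simp add: vnorm_def)
next
  case False
  define t where "t = vnorm d x"
  have t: "0 < t" using False vnorm_nonneg[of d x] unfolding t_def by linarith
  have "vnorm d (\<lambda>j. of_real (1 / t) * x j) \<le> 1"
    by (subst vnorm_scaleR) (use t in \<open>simp add: t_def\<close>)
  then have "vnorm d (mv d M (\<lambda>j. of_real (1 / t) * x j)) \<le> opnorm d M"
    by (rule vnorm_mv_le_opnorm)
  then have "\<bar>1 / t\<bar> * vnorm d (mv d M x) \<le> opnorm d M"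
    by (simp only: mv_scaleR vnorm_scaleR)
  then show ?thesis using t by (simp add: t_def field_simps)
qed

lemma abs_sinc_le_1: "\<bar>sinc x\<bar> \<le> 1"
  unfolding sinc_def using abs_sin_x_le_abs_x[of x]
  by (auto simp: abs_divide divide_le_eq_1)

lemma mult_sinc: "x * sinc x = sin x"
  unfolding sinc_def by simp

lemma cos_power2_add_mult_sinc_power2: "(cos x)\<^sup>2 + (x * sinc x)\<^sup>2 = 1"
  by (simp add: mult_sinc)

lemma vnorm_dgm_le:
  assumes "\<And>\<xi>. \<bar>f \<xi>\<bar> \<le> c"
  shows "vnorm d (dgm f h w x) \<le> c * vnorm d x"
  unfolding dgm_def using assms order_trans[OF abs_ge_zero assms]
  by (intro vnorm_mult_le) auto

definition diag_sandwich ::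
  "nat \<Rightarrow> (nat \<Rightarrow> nat \<Rightarrow> complex) \<Rightarrow> (real \<Rightarrow> real) \<Rightarrow> real \<Rightarrow> (nat \<Rightarrow> real)
    \<Rightarrow> (nat \<Rightarrow> complex) \<Rightarrow> (nat \<Rightarrow> complex)" where
  "diag_sandwich d A f h w x = dgm f h w (mv d A (dgm f h w x))"

lemma vinner_diag_sandwich_commute:
  assumes "self_adjoint d A"
  shows "vinner d x (diag_sandwich d A f h w y) = cnj (vinner d y (diag_sandwich d A f h w x))"
proof -
  let ?F = "\<lambda>j. complex_of_real (f (h * w j))"
  have adj: "cnj (A j k) = A k j" if "j < d" "k < d" for j k
    using assms that unfolding self_adjoint_def by (metis complex_cnj_cnj)
  have "vinner d x (diag_sandwich d A f h w y)
      = (\<Sum>j<d. \<Sum>k<d. x j * cnj (A j k) * ?F j * ?F k * cnj (y k))"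
    unfolding diag_sandwich_def vinner_def dgm_def mv_def cnj_sum sum_distrib_left
    by (intro sum.cong refl) (simp add: mult_ac)
  also have "\<dots> = (\<Sum>k<d. \<Sum>j<d. x j * A k j * ?F j * ?F k * cnj (y k))"
    by (subst sum.swap) (intro sum.cong refl, simp add: adj)
  also have "\<dots> = cnj (vinner d y (diag_sandwich d A f h w x))"
    unfolding diag_sandwich_def vinner_def dgm_def mv_def cnj_sum sum_distrib_left
    by (intro sum.cong refl) (simp add: mult_ac)
  finally show ?thesis .
qed

lemma vnorm_diag_sandwich_le:
  assumes "\<And>\<xi>. \<bar>f \<xi>\<bar> \<le> c"
  shows "vnorm d (diag_sandwich d A f h w x) \<le> c\<^sup>2 * opnorm d A * vnorm d x"
proof -
  have c: "0 \<le> c" using order_trans[OF abs_ge_zero assms] .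
  have "vnorm d (diag_sandwich d A f h w x) \<le> c * vnorm d (mv d A (dgm f h w x))"
    unfolding diag_sandwich_def by (rule vnorm_dgm_le[OF assms])
  also have "\<dots> \<le> c * (opnorm d A * vnorm d (dgm f h w x))"
    using c by (intro mult_left_mono vnorm_mv_le)
  also have "\<dots> \<le> c * (opnorm d A * (c * vnorm d x))"
    using c opnorm_nonneg by (intro mult_left_mono vnorm_dgm_le[OF assms]) auto
  finally show ?thesis by (simp add: power2_eq_square mult_ac)
qed

lemma dgm_mv_dgm_sinc_factor:
  assumes "\<And>\<xi>. \<psi> \<xi> = sinc \<xi> * \<phi> \<xi>"
  shows "dgm \<psi> h w (mv d A (dgm \<phi> h w x))
    = (\<lambda>j. of_real (sinc (h * w j)) * diag_sandwich d A \<phi> h w x j)"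
  unfolding diag_sandwich_def dgm_def using assms by (simp add: mult.assoc)

text \<open>Componentwise: \<open>(w q, u) \<mapsto> (w q', u' + s v)\<close> is a rotation, and
  \<open>c q' - s (u' + s v) = q\<close>, so the terms in \<open>v\<close> cancel.\<close>
lemma rotation_kick_energy_eq:
  fixes q u v :: complex and c s w :: real
  assumes "c\<^sup>2 + (w * s)\<^sup>2 = 1"
  defines "q' \<equiv> of_real c * q + of_real s * u"
    and "u' \<equiv> - of_real (w * (w * s)) * q + of_real c * u - of_real s * v"
  shows "(cmod u')\<^sup>2 + w\<^sup>2 * (cmod q')\<^sup>2 + Re ((of_real c * q' + of_real s * u') * cnj v)
       = (cmod u)\<^sup>2 + w\<^sup>2 * (cmod q)\<^sup>2 + Re (q * cnj v)"
  using assms(1) unfolding q'_def u'_def cmod_power2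
  by (simp add: power2_eq_square algebra_simps) algebra

definition modified_energy ::
  "nat \<Rightarrow> (nat \<Rightarrow> real) \<Rightarrow> ((nat \<Rightarrow> complex) \<Rightarrow> nat \<Rightarrow> complex)
    \<Rightarrow> (nat \<Rightarrow> nat \<Rightarrow> complex) \<Rightarrow> (nat \<Rightarrow> nat \<Rightarrow> complex) \<Rightarrow> nat \<Rightarrow> real" where
  "modified_energy d w B q r n = (vnorm d (r n))\<^sup>2 + (vnorm d (\<lambda>j. of_real (w j) * q n j))\<^sup>2
     + Re (vinner d (q (Suc n)) (B (q n)))"

lemma modified_energy_conserved:
  assumes B_commute: "\<And>x y. vinner d x (B y) = cnj (vinner d y (B x))"
    and rotation: "\<And>j. j < d \<Longrightarrow> (c j)\<^sup>2 + (w j * s j)\<^sup>2 = 1"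
    and q_Suc: "\<And>n j. j < d \<Longrightarrow> q (Suc n) j = of_real (c j) * q n j + of_real (s j) * r n j"
    and r_Suc: "\<And>n j. j < d \<Longrightarrow> r (Suc n) j = - of_real (w j * (w j * s j)) * q n j
      + of_real (c j) * r n j - of_real (s j) * B (q (Suc n)) j"
  shows "modified_energy d w B q r n = modified_energy d w B q r 0"
proof (induction n)
  case (Suc n)
  let ?e = "\<lambda>n j. (cmod (r n j))\<^sup>2 + (w j)\<^sup>2 * (cmod (q n j))\<^sup>2"
  have energy_sum: "modified_energy d w B q r m
      = (\<Sum>j<d. ?e m j) + Re (vinner d (q (Suc m)) (B (q m)))" for m
    unfolding modified_energy_def vnorm_power2
    by (simp add: sum.distrib norm_mult power_mult_distrib)
  have step: "?e (Suc n) j + Re (q (Suc (Suc n)) j * cnj (B (q (Suc n)) j))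
      = ?e n j + Re (q n j * cnj (B (q (Suc n)) j))" if "j < d" for j
    unfolding q_Suc[OF that, of "Suc n"] r_Suc[OF that, of n] q_Suc[OF that, of n]
    by (rule rotation_kick_energy_eq[OF rotation[OF that]])
  have "modified_energy d w B q r (Suc n)
      = (\<Sum>j<d. ?e n j) + Re (vinner d (q n) (B (q (Suc n))))"
    unfolding energy_sum vinner_def Re_sum sum.distrib[symmetric]
    by (intro sum.cong refl) (rule step, simp)
  also have "\<dots> = modified_energy d w B q r n"
    unfolding energy_sum B_commute[of "q n"] by simp
  finally show ?case using Suc.IH by simp
qed simp

lemma norm_vinner_step_le:
  assumes b: "vnorm d b \<le> a * vnorm d q"
    and c: "\<And>j. j < d \<Longrightarrow> \<bar>c j\<bar> \<le> 1" and s: "\<And>j. j < d \<Longrightarrow> \<bar>s j\<bar> \<le> 1"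
    and q': "\<And>j. j < d \<Longrightarrow> q' j = of_real (c j) * q j + of_real (s j) * r j"
  shows "cmod (vinner d q' b) \<le> (vnorm d q + vnorm d r) * (a * vnorm d q)"
proof -
  have "vnorm d q' = vnorm d (\<lambda>j. of_real (c j) * q j + of_real (s j) * r j)"
    using q' by (rule vnorm_cong)
  also have "\<dots> \<le> vnorm d (\<lambda>j. of_real (c j) * q j) + vnorm d (\<lambda>j. of_real (s j) * r j)"
    by (rule vnorm_add_le)
  also have "\<dots> \<le> 1 * vnorm d q + 1 * vnorm d r"
    using c s by (intro add_mono vnorm_mult_le) auto
  finally have q'_le: "vnorm d q' \<le> vnorm d q + vnorm d r" by simp
  have "cmod (vinner d q' b) \<le> vnorm d q' * vnorm d b"
    by (rule norm_vinner_le)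
  also have "\<dots> \<le> (vnorm d q + vnorm d r) * (a * vnorm d q)"
    using q'_le b by (rule mult_mono) (simp_all add: vnorm_nonneg)
  finally show ?thesis .
qed

lemma vnorm_power2_le_modified_energy:
  assumes B_bound: "\<And>x. vnorm d (B x) \<le> a * vnorm d x" and a: "0 \<le> a"
    and w: "\<And>j. j < d \<Longrightarrow> a / 2 + 1 \<le> w j"
    and c: "\<And>j. j < d \<Longrightarrow> \<bar>c j\<bar> \<le> 1" and s: "\<And>j. j < d \<Longrightarrow> \<bar>s j\<bar> \<le> 1"
    and q_Suc: "\<And>j. j < d \<Longrightarrow> q (Suc n) j = of_real (c j) * q n j + of_real (s j) * r n j"
  shows "(vnorm d (q n))\<^sup>2 \<le> modified_energy d w B q r n"
proof -
  define x y z where "x = vnorm d (q n)" and "y = vnorm d (r n)"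
    and "z = vnorm d (\<lambda>j. of_real (w j) * q n j)"
  have "(a / 2 + 1) * x \<le> z"
    unfolding x_def z_def using a
    by (intro vnorm_mult_ge) (auto intro: order_trans[OF w abs_ge_self])
  then have z: "((a / 2 + 1) * x)\<^sup>2 \<le> z\<^sup>2"
    using a by (intro power_mono) (auto simp: x_def vnorm_nonneg)
  have coupling: "- ((x + y) * (a * x)) \<le> Re (vinner d (q (Suc n)) (B (q n)))"
    using abs_Re_le_cmod[of "vinner d (q (Suc n)) (B (q n))"]
      norm_vinner_step_le[where q' = "q (Suc n)" and q = "q n" and r = "r n", OF B_bound c s q_Suc]
    unfolding x_def y_def by linarith
  have "x\<^sup>2 + (y - a * x / 2)\<^sup>2 = y\<^sup>2 + ((a / 2 + 1) * x)\<^sup>2 - (x + y) * (a * x)"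
    by (simp add: power2_eq_square algebra_simps)
  also have "\<dots> \<le> y\<^sup>2 + z\<^sup>2 + Re (vinner d (q (Suc n)) (B (q n)))"
    using z coupling by linarith
  also have "\<dots> = modified_energy d w B q r n"
    by (simp add: modified_energy_def y_def z_def)
  finally have "x\<^sup>2 + (y - a * x / 2)\<^sup>2 \<le> modified_energy d w B q r n" .
  then show ?thesis
    using zero_le_power2[of "y - a * x / 2"] unfolding x_def by linarith
qed

lemma modified_energy_le:
  assumes B_bound: "\<And>x. vnorm d (B x) \<le> a * vnorm d x" and a: "0 \<le> a"
    and c: "\<And>j. j < d \<Longrightarrow> \<bar>c j\<bar> \<le> 1" and s: "\<And>j. j < d \<Longrightarrow> \<bar>s j\<bar> \<le> 1"
    and q_Suc: "\<And>j. j < d \<Longrightarrow> q (Suc n) j = of_real (c j) * q n j + of_real (s j) * r n j"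
    and R: "vnorm d (r n) \<le> R"
  shows "modified_energy d w B q r n
    \<le> R\<^sup>2 + (vnorm d (\<lambda>j. of_real (w j) * q n j))\<^sup>2 + (vnorm d (q n) + R) * a * vnorm d (q n)"
proof -
  have "Re (vinner d (q (Suc n)) (B (q n))) \<le> (vnorm d (q n) + vnorm d (r n)) * (a * vnorm d (q n))"
    using complex_Re_le_cmod
    by (rule order_trans)
      (rule norm_vinner_step_le[where q' = "q (Suc n)" and q = "q n" and r = "r n", OF B_bound c s q_Suc])
  also have "\<dots> \<le> (vnorm d (q n) + R) * a * vnorm d (q n)"
    using R a by (simp add: mult_right_mono vnorm_nonneg mult.assoc)
  finally have "Re (vinner d (q (Suc n)) (B (q n))) \<le> (vnorm d (q n) + R) * a * vnorm d (q n)" .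
  moreover have "(vnorm d (r n))\<^sup>2 \<le> R\<^sup>2"
    using R by (intro power_mono) (auto simp: vnorm_nonneg)
  ultimately show ?thesis
    unfolding modified_energy_def by linarith
qed

lemma vnorm_rotation_kick_le:
  assumes B_commute: "\<And>x y. vinner d x (B y) = cnj (vinner d y (B x))"
    and B_bound: "\<And>x. vnorm d (B x) \<le> a * vnorm d x" and a: "0 \<le> a"
    and w: "\<And>j. j < d \<Longrightarrow> a / 2 + 1 \<le> w j"
    and rotation: "\<And>j. j < d \<Longrightarrow> (c j)\<^sup>2 + (w j * s j)\<^sup>2 = 1"
    and s: "\<And>j. j < d \<Longrightarrow> \<bar>s j\<bar> \<le> 1"
    and q_Suc: "\<And>n j. j < d \<Longrightarrow> q (Suc n) j = of_real (c j) * q n j + of_real (s j) * r n j"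
    and r_Suc: "\<And>n j. j < d \<Longrightarrow> r (Suc n) j = - of_real (w j * (w j * s j)) * q n j
      + of_real (c j) * r n j - of_real (s j) * B (q (Suc n)) j"
    and R: "vnorm d (r 0) \<le> R"
  shows "vnorm d (q n) \<le>
    sqrt (R\<^sup>2 + (vnorm d (\<lambda>j. of_real (w j) * q 0 j))\<^sup>2 + (vnorm d (q 0) + R) * a * vnorm d (q 0))"
proof (rule real_le_rsqrt)
  have c: "\<bar>c j\<bar> \<le> 1" if "j < d" for j
    unfolding abs_square_le_1[symmetric] using rotation[OF that] zero_le_power2[of "w j * s j"]
    by linarith
  have "(vnorm d (q n))\<^sup>2 \<le> modified_energy d w B q r n"
    by (rule vnorm_power2_le_modified_energy[where c = c and s = s and q = q and r = r,
          OF B_bound a w c s q_Suc])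
  also have "\<dots> = modified_energy d w B q r 0"
    by (rule modified_energy_conserved[where c = c and s = s and q = q and r = r,
          OF B_commute rotation q_Suc r_Suc])
  also have "\<dots> \<le> R\<^sup>2 + (vnorm d (\<lambda>j. of_real (w j) * q 0 j))\<^sup>2
      + (vnorm d (q 0) + R) * a * vnorm d (q 0)"
    by (rule modified_energy_le[where c = c and s = s and q = q and r = r,
          OF B_bound a c s q_Suc R])
  finally show "(vnorm d (q n))\<^sup>2
    \<le> R\<^sup>2 + (vnorm d (\<lambda>j. of_real (w j) * q 0 j))\<^sup>2 + (vnorm d (q 0) + R) * a * vnorm d (q 0)" .
qed

lemma trig_scheme_as_rotation_kick:
  assumes \<psi>\<^sub>1: "\<forall>\<xi>. \<psi>\<^sub>1 \<xi> = sinc \<xi> * \<phi> \<xi>"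
    and q_Suc: "\<forall>n. q (Suc n) =
             (\<lambda>j. dgm cos h \<omega> (q n) j + complex_of_real h * dgm sinc h \<omega> (qd n) j
                 - complex_of_real (h\<^sup>2 / 2) *
                     dgm sinc h \<omega> (dgm \<psi>\<^sub>1 h \<omega> (mv d A (dgm \<phi> h \<omega> (q n)))) j)"
    and qd_Suc: "\<forall>n. qd (Suc n) =
             (\<lambda>j. - complex_of_real (\<omega> j) * dgm sin h \<omega> (q n) j + dgm cos h \<omega> (qd n) j
                 - complex_of_real (h / 2) *
                     (dgm cos h \<omega> (dgm \<psi>\<^sub>1 h \<omega> (mv d A (dgm \<phi> h \<omega> (q n)))) j
                      + dgm \<psi>\<^sub>1 h \<omega> (mv d A (dgm \<phi> h \<omega> (q (Suc n)))) j))"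
    and B_def: "B = diag_sandwich d A \<phi> h \<omega>"
    and s_def: "\<And>j. s j = h * sinc (h * \<omega> j)"
    and r_def: "\<And>n j. r n j = qd n j - of_real (s j / 2) * B (q n) j"
  shows "q (Suc n) j = of_real (cos (h * \<omega> j)) * q n j + of_real (s j) * r n j"
    and "r (Suc n) j = - of_real (\<omega> j * (\<omega> j * s j)) * q n j + of_real (cos (h * \<omega> j)) * r n j
      - of_real (s j) * B (q (Suc n)) j"
proof -
  have sin: "sin (h * \<omega> j) = \<omega> j * (h * sinc (h * \<omega> j))"
    using mult_sinc[of "h * \<omega> j"] by (simp add: mult_ac)
  note sinc_factor = dgm_mv_dgm_sinc_factor[where h = h and w = \<omega> and d = d and A = A,
    OF \<psi>\<^sub>1[rule_format], folded B_def]
  show "q (Suc n) j = of_real (cos (h * \<omega> j)) * q n j + of_real (s j) * r n j"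
    using q_Suc unfolding sinc_factor
    by (simp add: s_def r_def dgm_def algebra_simps power2_eq_square)
  show "r (Suc n) j = - of_real (\<omega> j * (\<omega> j * s j)) * q n j + of_real (cos (h * \<omega> j)) * r n j
      - of_real (s j) * B (q (Suc n)) j"
    using qd_Suc unfolding sinc_factor
    by (simp add: r_def s_def dgm_def sin algebra_simps)
qed

definition trig_scheme_bound :: "real \<Rightarrow> real \<Rightarrow> real \<Rightarrow> real \<Rightarrow> real \<Rightarrow> real" where
  "trig_scheme_bound c\<^sub>0 nA nq n\<Omega>q nqd =
    (let a = c\<^sub>0\<^sup>2 * nA; R = nqd + a * nq / 2 in sqrt (R\<^sup>2 + n\<Omega>q\<^sup>2 + (nq + R) * a * nq))"

lemma trig_scheme_bounded:
  assumes A: "self_adjoint d A" and h: "0 < h" "h \<le> 1"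
    and \<psi>\<^sub>1: "\<forall>\<xi>. \<psi>\<^sub>1 \<xi> = sinc \<xi> * \<phi> \<xi>" and \<phi>: "\<forall>\<xi>. \<bar>\<phi> \<xi>\<bar> \<le> c\<^sub>0"
    and \<omega>_min: "Min (\<omega> ` {..<d}) \<ge> c\<^sub>0\<^sup>2 * opnorm d A / 2 + 1"
    and q_Suc: "\<forall>n. q (Suc n) =
             (\<lambda>j. dgm cos h \<omega> (q n) j + complex_of_real h * dgm sinc h \<omega> (qd n) j
                 - complex_of_real (h\<^sup>2 / 2) *
                     dgm sinc h \<omega> (dgm \<psi>\<^sub>1 h \<omega> (mv d A (dgm \<phi> h \<omega> (q n)))) j)"
    and qd_Suc: "\<forall>n. qd (Suc n) =
             (\<lambda>j. - complex_of_real (\<omega> j) * dgm sin h \<omega> (q n) j + dgm cos h \<omega> (qd n) j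
                 - complex_of_real (h / 2) *
                     (dgm cos h \<omega> (dgm \<psi>\<^sub>1 h \<omega> (mv d A (dgm \<phi> h \<omega> (q n)))) j
                      + dgm \<psi>\<^sub>1 h \<omega> (mv d A (dgm \<phi> h \<omega> (q (Suc n)))) j))"
  shows "vnorm d (q n) \<le> trig_scheme_bound c\<^sub>0 (opnorm d A) (vnorm d (q 0))
    (vnorm d (\<lambda>j. complex_of_real (\<omega> j) * q 0 j)) (vnorm d (qd 0))"
proof -
  define B where "B = diag_sandwich d A \<phi> h \<omega>"
  define s where "s j = h * sinc (h * \<omega> j)" for j
  define r where "r n j = qd n j - of_real (s j / 2) * B (q n) j" for n j
  define a where "a = c\<^sub>0\<^sup>2 * opnorm d A"
  note rotation_kick = trig_scheme_as_rotation_kick[OF \<psi>\<^sub>1 q_Suc qd_Suc B_def s_def r_def]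
  have B_bound: "vnorm d (B x) \<le> a * vnorm d x" for x
    unfolding B_def a_def using \<phi> by (intro vnorm_diag_sandwich_le) auto
  have a: "0 \<le> a" unfolding a_def by (simp add: opnorm_nonneg)
  have \<omega>: "a / 2 + 1 \<le> \<omega> j" if "j < d" for j
  proof -
    have "Min (\<omega> ` {..<d}) \<le> \<omega> j" using that by (intro Min_le) auto
    then show ?thesis using \<omega>_min unfolding a_def by linarith
  qed
  have s_le: "\<bar>s j\<bar> \<le> 1" for j
    unfolding s_def abs_mult using h abs_sinc_le_1 by (intro mult_le_one) auto
  have rotation: "(cos (h * \<omega> j))\<^sup>2 + (\<omega> j * s j)\<^sup>2 = 1" for j
    using cos_power2_add_mult_sinc_power2[of "h * \<omega> j"] unfolding s_def by (simp add: mult_ac)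
  have r0: "vnorm d (r 0) \<le> vnorm d (qd 0) + a * vnorm d (q 0) / 2"
  proof -
    have "vnorm d (r 0) \<le> vnorm d (qd 0) + vnorm d (\<lambda>j. of_real (s j / 2) * B (q 0) j)"
      unfolding r_def by (rule vnorm_diff_le)
    also have "\<dots> \<le> vnorm d (qd 0) + 1 / 2 * vnorm d (B (q 0))"
      using s_le by (intro add_left_mono vnorm_mult_le) (auto simp: abs_mult)
    also have "\<dots> \<le> vnorm d (qd 0) + a * vnorm d (q 0) / 2"
      using B_bound[of "q 0"] by simp
    finally show ?thesis .
  qed
  have "vnorm d (q n) \<le> sqrt ((vnorm d (qd 0) + a * vnorm d (q 0) / 2)\<^sup>2
      + (vnorm d (\<lambda>j. of_real (\<omega> j) * q 0 j))\<^sup>2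
      + (vnorm d (q 0) + (vnorm d (qd 0) + a * vnorm d (q 0) / 2)) * a * vnorm d (q 0))"
    using vinner_diag_sandwich_commute[OF A] B_bound a \<omega> rotation s_le rotation_kick r0
    unfolding B_def by (rule vnorm_rotation_kick_le)
  then show ?thesis
    by (simp only: trig_scheme_bound_def Let_def a_def)
qed

theorem lemma5:
  shows "\<exists>C :: real \<Rightarrow> real \<Rightarrow> real \<Rightarrow> real \<Rightarrow> real \<Rightarrow> real.
    \<forall>(d::nat) (\<omega>::nat \<Rightarrow> real) (A::nat \<Rightarrow> nat \<Rightarrow> complex) (h::real)
      (\<psi>\<^sub>1::real \<Rightarrow> real) (\<phi>::real \<Rightarrow> real) (c\<^sub>0::real) (c\<^sub>1::real)
      (q::nat \<Rightarrow> nat \<Rightarrow> complex) (qd::nat \<Rightarrow> nat \<Rightarrow> complex).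
      d \<ge> 1 \<and> (\<forall>j<d. \<omega> j > 0) \<and> self_adjoint d A \<and> 0 < h \<and> h \<le> 1
      \<and> (\<forall>\<xi>. \<psi>\<^sub>1 (-\<xi>) = \<psi>\<^sub>1 \<xi>) \<and> (\<forall>\<xi>. \<phi> (-\<xi>) = \<phi> \<xi>)
      \<and> (\<forall>\<xi>. \<psi>\<^sub>1 \<xi> = sinc \<xi> * \<phi> \<xi>)
      \<and> c\<^sub>0 \<ge> 0 \<and> c\<^sub>1 \<ge> 0
      \<and> (\<forall>\<xi>. \<bar>\<psi>\<^sub>1 \<xi>\<bar> \<le> c\<^sub>0 \<and> \<bar>\<phi> \<xi>\<bar> \<le> c\<^sub>0 \<and> \<bar>\<phi> \<xi> - 1\<bar> \<le> c\<^sub>1 * \<bar>\<xi>\<bar>)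
      \<and> Min (\<omega> ` {..<d}) \<ge> c\<^sub>0\<^sup>2 * opnorm d A / 2 + 1
      \<and> (\<forall>n. q (Suc n) =
             (\<lambda>j. dgm cos h \<omega> (q n) j + complex_of_real h * dgm sinc h \<omega> (qd n) j
                 - complex_of_real (h\<^sup>2 / 2) *
                     dgm sinc h \<omega> (dgm \<psi>\<^sub>1 h \<omega> (mv d A (dgm \<phi> h \<omega> (q n)))) j))
      \<and> (\<forall>n. qd (Suc n) =
             (\<lambda>j. - complex_of_real (\<omega> j) * dgm sin h \<omega> (q n) j + dgm cos h \<omega> (qd n) j
                 - complex_of_real (h / 2) *
                     (dgm cos h \<omega> (dgm \<psi>\<^sub>1 h \<omega> (mv d A (dgm \<phi> h \<omega> (q n)))) j
                      + dgm \<psi>\<^sub>1 h \<omega> (mv d A (dgm \<phi> h \<omega> (q (Suc n)))) j)))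
      \<longrightarrow> (\<forall>n. vnorm d (q n) \<le>
             C c\<^sub>0 (opnorm d A) (vnorm d (q 0))
               (vnorm d (\<lambda>j. complex_of_real (\<omega> j) * q 0 j)) (vnorm d (qd 0)))"
  by (intro exI[of _ trig_scheme_bound] allI impI, elim conjE, rule trig_scheme_bounded)
    (assumption | simp)+

end
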